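(* Let $\lambda>0$, $\xi>0$, $v_2<v_1$ with either $v_2<0<v_1$ or $0<v_2<v_1$, and let $\tilde p(x,t|v_j)$ be the (generalized) density of the position $\tilde X(t)$ of the extended telegraph process driven by GCPs with parameter $\lambda$ with Poissonian resets to the origin at rate $\xi$, conditional on $\tilde X(0)=0$, $V(0)=v_j$. Then for $x\in\mathbb R$ and $j=1,2$, $\tilde p(x|v_j):=\lim_{t\to+\infty}\tilde p(x,t|v_j)$ is given by $$ \tilde p(x|v_j)=\mathrm{sgn}(v_j)\mathbb 1_{\{x/v_j>0\}}\frac{\xi e^{-\xi x/v_j}}{v_j+\lambda x}+\frac{\xi e^{\xi/\lambda}}{v_1-v_2}\Gamma\Big[0,\Big(M_x+\frac1\lambda\Big)\xi\Big]\quad\text{if } v_2<0<v_1, $$ $$ \tilde p(x|v_j)=\mathbb 1_{\{x>0\}}\Big\{\frac{\xi e^{-\xi x/v_j}}{v_j+\lambda x}+\frac{\xi e^{\xi/\lambda}}{v_1-v_2}\Gamma\Big[0,\Big(\frac x{v_1}+\frac1\lambda\Big)\xi,\Big(\frac x{v_2}+\frac1\lambda\Big)\xi\Big]\Big\}\quad\text{if } 0<v_2<v_1. $$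
   Context: GCP with intensity $\lambda>0$: a Poisson process whose rate is random, exponentially distributed with mean $\lambda$; increments satisfy $P\{\tilde N_\lambda(t+s)-\tilde N_\lambda(t)=k\}=\frac{1}{1+\lambda s}(\frac{\lambda s}{1+\lambda s})^k$. The process: a particle starts at the origin with velocity $V(0)=v_j$ ($v_1,v_2\ne0$, $v_2<v_1$), moves with velocity alternating between $v_1$ and $v_2$, the periods at velocity $v_1$ and at $v_2$ being governed by two independent GCPs of intensity $\lambda$; additionally it is instantaneously reset to the origin at the epochs of an independent Poisson process of rate $\xi$, restarting afresh with velocity $v_j$. Equivalently $\tilde p(x,t|v_j)=e^{-\xi t}p(x,t|v_j)+\xi\int_0^te^{-\xi s}p(x,s|v_j)ds$, where $p(x,t|v_j)=\frac{\delta(x-v_jt)}{1+\lambda t}+\mathbb 1_{\{v_2t<x<v_1t\}}\frac{\lambda}{(v_1-v_2)(1+\lambda t)}$ is the generalized density without resets ($\delta$ the Dirac delta). Notation: $M_x=\max\{x/v_1,x/v_2\}$; $\Gamma(a,z)=\int_z^\infty s^{a-1}e^{-s}ds$ (upper incomplete gamma function); $\Gamma(a,z_0,z_1)=\int_{z_0}^{z_1}s^{a-1}e^{-s}ds$. *)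

theory Defs
  imports "HOL-Analysis.Analysis"
begin

text \<open>Probability, under the generalized density
  p(x,s|v_j) = delta(x - v_j s)/(1+lambda s) + 1_{v_2 s < x < v_1 s} lambda/((v_1-v_2)(1+lambda s)),
  of a Borel set A, i.e. the integral of p(.,s|v_j) over A (the Dirac part contributes
  1_A(v_j s)/(1+lambda s)).\<close>
definition p_prob :: "real \<Rightarrow> real \<Rightarrow> real \<Rightarrow> real \<Rightarrow> real \<Rightarrow> real set \<Rightarrow> real" where
  "p_prob lam v1 v2 vj s A =
     indicator A (vj * s) / (1 + lam * s)
     + (\<integral>x\<in>A. indicator {v2 * s <..< v1 * s} x * (lam / ((v1 - v2) * (1 + lam * s))) \<partial>lborel)"

definition ptilde_prob :: "real \<Rightarrow> real \<Rightarrow> real \<Rightarrow> real \<Rightarrow> real \<Rightarrow> real \<Rightarrow> real set \<Rightarrow> real" where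
  "ptilde_prob lam xi v1 v2 vj t A =
     exp (- xi * t) * p_prob lam v1 v2 vj t A
     + xi * (\<integral>s\<in>{0..t}. exp (- xi * s) * p_prob lam v1 v2 vj s A \<partial>lborel)"

definition upper_Gamma0 :: "real \<Rightarrow> real" where
  "upper_Gamma0 z = (\<integral>s\<in>{z..}. exp (- s) / s \<partial>lborel)"

definition Gamma0_between :: "real \<Rightarrow> real \<Rightarrow> real" where
  "Gamma0_between z0 z1 = (\<integral>s\<in>{z0..z1}. exp (- s) / s \<partial>lborel)"

definition Mx :: "real \<Rightarrow> real \<Rightarrow> real \<Rightarrow> real" where
  "Mx v1 v2 x = max (x / v1) (x / v2)"

end

(* Averaging over the last reset before time t gives
     p~(., t|v_j) = e^(-xi t) p(., t|v_j) + int_0^t xi e^(-xi s) p(., s|v_j) ds.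
   Each p(., s|v_j) is a probability measure, so dropping the first term and extending the
   integral to [0, oo) changes the mass of any set by at most e^(-xi t): the law converges
   uniformly over Borel sets to the mixture int_0^oo xi e^(-xi s) p(., s|v_j) ds.
   By Tonelli this mixture has a density. The Dirac part delta(x - v_j s)/(1 + lam s)
   contributes xi e^(-xi x/v_j)/(v_j + lam x) after substituting x = v_j s. The uniform part
   contributes the integral of xi e^(-xi s) lam/((v1 - v2)(1 + lam s)) over the times s >= 0
   with v2 s < x < v1 s, and u = xi (1/lam + s) turns it into
   xi e^(xi/lam)/(v1 - v2) int e^(-u)/u du over [(M_x + 1/lam) xi, oo) when v2 < 0 < v1,
   and over [(x/v1 + 1/lam) xi, (x/v2 + 1/lam) xi] when 0 < v2 and x > 0. *)

theory Submission
  imports Defs "HOL-Real_Asymp.Real_Asymp"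
begin

lemma set_integral_eq_enn2real_set_nn_integral:
  fixes f :: "'a \<Rightarrow> real"
  assumes [measurable]: "f \<in> borel_measurable M" "A \<in> sets M"
    and nonneg: "\<And>x. x \<in> A \<Longrightarrow> 0 \<le> f x"
  shows "(\<integral>x\<in>A. f x \<partial>M) = enn2real (\<integral>\<^sup>+x\<in>A. ennreal (f x) \<partial>M)"
proof -
  have "(\<integral>x\<in>A. f x \<partial>M) = enn2real (\<integral>\<^sup>+x. ennreal (indicator A x * f x) \<partial>M)"
    unfolding set_lebesgue_integral_def using nonneg
    by (subst integral_eq_nn_integral) (auto simp: indicator_def)
  also have "(\<integral>\<^sup>+x. ennreal (indicator A x * f x) \<partial>M) = (\<integral>\<^sup>+x\<in>A. ennreal (f x) \<partial>M)"
    by (intro nn_integral_cong) (simp split: split_indicator)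
  finally show ?thesis .
qed

lemma nn_integral_exp_minus_Ici:
  fixes xi c :: real
  assumes "0 < xi"
  shows "(\<integral>\<^sup>+s\<in>{c..}. ennreal (exp (- xi * s)) \<partial>lborel) = ennreal (exp (- xi * c) / xi)"
  using nn_integral_has_integral_lebesgue'[OF _ has_integral_exp_minus_to_infinity[OF assms]]
  by simp

lemma set_nn_integral_le_exp_tail:
  fixes g :: "real \<Rightarrow> real"
  assumes "0 < xi" "S \<subseteq> {a..}" "\<And>s. s \<in> S \<Longrightarrow> g s \<le> exp (- xi * s)"
  shows "(\<integral>\<^sup>+s\<in>S. ennreal (g s) \<partial>lborel) \<le> ennreal (exp (- xi * a) / xi)"
proof -
  have "(\<integral>\<^sup>+s\<in>S. ennreal (g s) \<partial>lborel) \<le> (\<integral>\<^sup>+s\<in>{a..}. ennreal (exp (- xi * s)) \<partial>lborel)"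
    using assms by (intro nn_integral_mono) (auto split: split_indicator intro: ennreal_leI)
  then show ?thesis
    using nn_integral_exp_minus_Ici[OF \<open>0 < xi\<close>] by simp
qed

lemma exponential_mixture_truncation_error:
  fixes q :: "real \<Rightarrow> real"
  assumes xi: "0 < xi" and [measurable]: "q \<in> borel_measurable borel"
    and q01: "\<And>s. 0 \<le> s \<Longrightarrow> 0 \<le> q s \<and> q s \<le> 1" and t: "0 \<le> t"
  shows "\<bar>exp (- xi * t) * q t + xi * (\<integral>s\<in>{0..t}. exp (- xi * s) * q s \<partial>lborel)
           - xi * (\<integral>s\<in>{0..}. exp (- xi * s) * q s \<partial>lborel)\<bar> \<le> exp (- xi * t)"
proof -
  define g where "g s = exp (- xi * s) * q s" for s
  have [measurable]: "g \<in> borel_measurable borel"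
    unfolding g_def by measurable
  have g_bounds: "0 \<le> g s" "g s \<le> exp (- xi * s)" if "0 \<le> s" for s
    using q01[OF that] by (auto simp: g_def mult_left_le)
  define N where "N S = (\<integral>\<^sup>+s\<in>S. ennreal (g s) \<partial>lborel)" for S
  have N_le: "N S \<le> ennreal (exp (- xi * a) / xi)" if "S \<subseteq> {a..}" "0 \<le> a" for S a
    unfolding N_def using that g_bounds by (intro set_nn_integral_le_exp_tail[OF xi]) auto
  have integral_N: "(\<integral>s\<in>S. g s \<partial>lborel) = enn2real (N S)"
    if [measurable]: "S \<in> sets borel" and "S \<subseteq> {0..}" for S
    unfolding N_def using that g_bounds
    by (intro set_integral_eq_enn2real_set_nn_integral) auto
  have split: "N {0..} = N {0..t} + N {t<..}"
    unfolding N_def using t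
    by (subst nn_integral_add[symmetric])
      (auto intro!: nn_integral_cong split: split_indicator)
  have "N {0..} < \<infinity>"
    using N_le[of "{0..}" 0] by (simp add: order_le_less_trans)
  then have fin: "N {0..t} < \<infinity>" "N {t<..} < \<infinity>"
    unfolding split by auto
  have "N {t<..} \<le> ennreal (exp (- xi * t) / xi)"
    by (rule N_le) (use t in auto)
  then have "enn2real (N {t<..}) \<le> exp (- xi * t) / xi"
    using xi by (simp add: enn2real_leI)
  then have tail: "0 \<le> xi * enn2real (N {t<..})" "xi * enn2real (N {t<..}) \<le> exp (- xi * t)"
    using xi by (auto simp: field_simps)
  have "(\<integral>s\<in>{0..}. g s \<partial>lborel) = (\<integral>s\<in>{0..t}. g s \<partial>lborel) + enn2real (N {t<..})"
    using fin by (simp add: integral_N split enn2real_plus)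
  moreover have "0 \<le> exp (- xi * t) * q t" "exp (- xi * t) * q t \<le> exp (- xi * t)"
    using q01[OF t] by (auto simp: mult_left_le)
  ultimately show ?thesis
    using tail unfolding g_def[symmetric] by (simp add: distrib_left abs_le_iff)
qed

lemma p_prob_eq_measure:
  assumes [measurable]: "A \<in> sets borel"
  shows "p_prob lam v1 v2 vj s A = indicator A (vj * s) / (1 + lam * s)
           + lam / ((v1 - v2) * (1 + lam * s)) * measure lborel (A \<inter> {v2 * s<..<v1 * s})"
proof -
  have "(\<integral>x\<in>A. indicator {v2 * s<..<v1 * s} x * c \<partial>lborel)
              = c * measure lborel (A \<inter> {v2 * s<..<v1 * s})" for c
  proof -
    have "(\<lambda>x. indicator A x *\<^sub>R (indicator {v2 * s<..<v1 * s} x * c))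
          = (\<lambda>x. indicator (A \<inter> {v2 * s<..<v1 * s}) x * c)"
      by (auto simp: indicator_def)
    then show ?thesis
      unfolding set_lebesgue_integral_def by (simp only: integral_mult_left_zero integral_indicator) simp
  qed
  then show ?thesis
    unfolding p_prob_def by simp
qed

lemma p_prob_nonneg_le_1:
  assumes lam: "0 < lam" and v12: "v2 < v1" and s: "0 \<le> s" and [measurable]: "A \<in> sets borel"
  shows "0 \<le> p_prob lam v1 v2 vj s A \<and> p_prob lam v1 v2 vj s A \<le> 1"
proof -
  define m where "m = measure lborel (A \<inter> {v2 * s<..<v1 * s})"
  define c where "c = lam / ((v1 - v2) * (1 + lam * s))"
  have pos: "0 < 1 + lam * s"
    using lam s by (simp add: add_pos_nonneg)
  have c: "0 \<le> c" "c * ((v1 - v2) * s) = lam * s / (1 + lam * s)"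
    using lam pos v12 by (auto simp: c_def)
  have "m \<le> measure lborel {v2 * s<..<v1 * s}"
    unfolding m_def using emeasure_bounded_finite[of "{v2 * s<..<v1 * s}"]
    by (intro measure_mono_fmeasurable) (auto simp: fmeasurable_def)
  also have "\<dots> = (v1 - v2) * s"
  proof -
    have "v2 * s \<le> v1 * s"
      using v12 s by (simp add: mult_right_mono)
    then show ?thesis
      by (subst measure_lborel_Ioo) (auto simp: algebra_simps)
  qed
  finally have "c * m \<le> lam * s / (1 + lam * s)"
    using c mult_left_mono by metis
  moreover have "indicator A (vj * s) / (1 + lam * s) \<le> 1 / (1 + lam * s)"
    using pos by (simp add: divide_right_mono split: split_indicator)
  moreover have "1 / (1 + lam * s) + lam * s / (1 + lam * s) = 1"
    using pos by (simp add: field_simps)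
  ultimately show ?thesis
    unfolding p_prob_eq_measure[OF \<open>A \<in> sets borel\<close>] c_def[symmetric] m_def[symmetric]
    using pos c by (auto simp: m_def intro!: add_nonneg_nonneg)
qed

lemma p_prob_measurable[measurable]:
  assumes [measurable]: "A \<in> sets borel"
  shows "(\<lambda>s. p_prob lam v1 v2 vj s A) \<in> borel_measurable borel"
  unfolding p_prob_def set_lebesgue_integral_def indicator_def greaterThanLessThan_iff by measurable

text \<open>Density in \<open>x\<close> of the Dirac part of the mixture, the integral over \<open>s \<ge> 0\<close> of
  \<open>\<xi> e^(-\<xi> s) \<delta>(x - v\<^sub>j s)/(1 + \<lambda> s) ds\<close>.\<close>
definition atom_density :: "real \<Rightarrow> real \<Rightarrow> real \<Rightarrow> real \<Rightarrow> real" where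
  "atom_density lam xi vj x =
     sgn vj * (if x / vj > 0 then 1 else 0) * (xi * exp (- xi * x / vj) / (vj + lam * x))"

lemma atom_density_measurable[measurable]: "atom_density lam xi vj \<in> borel_measurable borel"
  unfolding atom_density_def by measurable

lemma atom_density_nonneg:
  assumes "0 < lam" "0 \<le> xi"
  shows "0 \<le> atom_density lam xi vj x"
proof (cases "x / vj > 0")
  case True
  then consider "0 < vj" "0 < x" | "vj < 0" "x < 0"
    by (auto simp: zero_less_divide_iff)
  then show ?thesis
  proof cases
    case 1
    then have "0 < vj + lam * x"
      using assms by (simp add: add_pos_pos)
    then show ?thesis
      using 1 assms by (simp add: atom_density_def)
  next
    case 2
    then have "vj + lam * x < 0"
      using assms mult_pos_neg[of lam x] by linarith
    then show ?thesis
      using 2 assms by (simp add: atom_density_def divide_nonneg_neg)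
  qed
qed (simp add: atom_density_def)

lemma atom_density_scaled:
  assumes "vj \<noteq> 0" "s \<noteq> 0"
  shows "\<bar>vj\<bar> * atom_density lam xi vj (vj * s)
           = indicator {0..} s * (xi * exp (- xi * s) / (1 + lam * s))"
proof (cases "0 < s")
  case True
  have "- xi * (vj * s) / vj = - xi * s" "vj + lam * (vj * s) = vj * (1 + lam * s)"
    using assms by (simp_all add: algebra_simps)
  then have "atom_density lam xi vj (vj * s) = sgn vj * (xi * exp (- xi * s) / (vj * (1 + lam * s)))"
    using assms True by (simp add: atom_density_def)
  moreover have "\<bar>vj\<bar> * sgn vj = vj"
    by (simp add: sgn_if)
  ultimately show ?thesis
    using assms True by (simp add: mult.assoc[symmetric])
qed (use assms in \<open>simp add: atom_density_def\<close>)

lemma set_nn_integral_atom_density: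
  assumes vj: "vj \<noteq> 0" and [measurable]: "A \<in> sets borel"
  shows "(\<integral>\<^sup>+x\<in>A. ennreal (atom_density lam xi vj x) \<partial>lborel)
           = (\<integral>\<^sup>+s\<in>{0..}. ennreal (xi * exp (- xi * s) / (1 + lam * s)) * indicator A (vj * s) \<partial>lborel)"
proof -
  have "(\<integral>\<^sup>+x\<in>A. ennreal (atom_density lam xi vj x) \<partial>lborel)
        = ennreal \<bar>vj\<bar> * (\<integral>\<^sup>+s. ennreal (atom_density lam xi vj (0 + vj * s)) * indicator A (0 + vj * s) \<partial>lborel)"
    by (rule nn_integral_real_affine) (use vj in auto)
  also have "\<dots> = (\<integral>\<^sup>+s. ennreal (\<bar>vj\<bar> * atom_density lam xi vj (vj * s)) * indicator A (vj * s) \<partial>lborel)"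
    by (subst nn_integral_cmult[symmetric]) (auto simp: ennreal_mult' mult.assoc)
  also have "\<dots> = (\<integral>\<^sup>+s\<in>{0..}. ennreal (xi * exp (- xi * s) / (1 + lam * s)) * indicator A (vj * s) \<partial>lborel)"
    using AE_lborel_singleton[of 0]
    by (intro nn_integral_cong_AE) (auto simp: atom_density_scaled[OF vj] split: split_indicator)
  finally show ?thesis .
qed

text \<open>\<open>\<xi> e^(-\<xi> s)\<close> times the height of the uniform part of \<open>p(x, s|v\<^sub>j)\<close>
  on \<open>(v\<^sub>2 s, v\<^sub>1 s)\<close>.\<close>
definition diffuse_weight :: "real \<Rightarrow> real \<Rightarrow> real \<Rightarrow> real \<Rightarrow> real \<Rightarrow> real" where
  "diffuse_weight lam xi v1 v2 s = xi * exp (- xi * s) * lam / ((v1 - v2) * (1 + lam * s))"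

definition diffuse_density :: "real \<Rightarrow> real \<Rightarrow> real \<Rightarrow> real \<Rightarrow> real \<Rightarrow> ennreal" where
  "diffuse_density lam xi v1 v2 x =
     (\<integral>\<^sup>+s\<in>{0..}. ennreal (diffuse_weight lam xi v1 v2 s) * indicator {v2 * s<..<v1 * s} x \<partial>lborel)"

lemma diffuse_density_measurable[measurable]:
  "diffuse_density lam xi v1 v2 \<in> borel_measurable borel"
  unfolding diffuse_density_def diffuse_weight_def indicator_def greaterThanLessThan_iff
  by measurable

lemma emeasure_reachable_measurable[measurable]:
  fixes A :: "real set"
  assumes A[measurable]: "A \<in> sets borel"
  shows "(\<lambda>s. emeasure lborel (A \<inter> {v2 * s<..<v1 * s})) \<in> borel_measurable borel"
proof -
  have "A \<inter> {v2 * s<..<v1 * s} \<in> sets borel" for s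
    by measurable
  then have "(\<lambda>s. emeasure lborel (A \<inter> {v2 * s<..<v1 * s}))
        = (\<lambda>s. \<integral>\<^sup>+x. indicator A x * indicator {v2 * s<..<v1 * s} x \<partial>lborel)"
    by (simp add: indicator_inter_arith[symmetric])
  also have "\<dots> \<in> borel_measurable borel"
    unfolding indicator_def greaterThanLessThan_iff by measurable
  finally show ?thesis .
qed

lemma set_nn_integral_diffuse_density:
  assumes [measurable]: "A \<in> sets borel"
  shows "(\<integral>\<^sup>+x\<in>A. diffuse_density lam xi v1 v2 x \<partial>lborel)
           = (\<integral>\<^sup>+s\<in>{0..}. ennreal (diffuse_weight lam xi v1 v2 s)
                              * emeasure lborel (A \<inter> {v2 * s<..<v1 * s}) \<partial>lborel)"
proof -
  define F where "F x s = ennreal (diffuse_weight lam xi v1 v2 s) * indicator {0..} s * indicator A x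
                            * indicator {v2 * s<..<v1 * s} x" for x s
  have [measurable]: "case_prod F \<in> borel_measurable (lborel \<Otimes>\<^sub>M lborel)"
    unfolding F_def diffuse_weight_def indicator_def greaterThanLessThan_iff by measurable
  have "diffuse_density lam xi v1 v2 x * indicator A x = (\<integral>\<^sup>+s. F x s \<partial>lborel)" for x
    unfolding diffuse_density_def F_def
    by (cases "x \<in> A") (auto simp: mult_ac)
  moreover have "(\<integral>\<^sup>+x. F x s \<partial>lborel) = ennreal (diffuse_weight lam xi v1 v2 s)
                   * emeasure lborel (A \<inter> {v2 * s<..<v1 * s}) * indicator {0..} s" for s
  proof -
    define c where "c = ennreal (diffuse_weight lam xi v1 v2 s) * indicator {0..} s"
    have "(\<integral>\<^sup>+x. F x s \<partial>lborel) = (\<integral>\<^sup>+x. c * indicator (A \<inter> {v2 * s<..<v1 * s}) x \<partial>lborel)"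
      unfolding F_def c_def by (intro nn_integral_cong) (simp add: indicator_inter_arith mult_ac)
    also have "\<dots> = c * emeasure lborel (A \<inter> {v2 * s<..<v1 * s})"
      by (rule nn_integral_cmult_indicator) simp
    finally show ?thesis
      by (simp add: c_def mult_ac)
  qed
  ultimately show ?thesis
    using lborel_pair.Fubini'[of F] by simp
qed

lemma ennreal_weighted_p_prob:
  assumes lam: "0 < lam" and v12: "v2 < v1" and xi: "0 \<le> xi" and s: "0 \<le> s"
    and [measurable]: "A \<in> sets borel"
  shows "ennreal (xi * exp (- xi * s) * p_prob lam v1 v2 vj s A)
           = ennreal (xi * exp (- xi * s) / (1 + lam * s)) * indicator A (vj * s)
             + ennreal (diffuse_weight lam xi v1 v2 s) * emeasure lborel (A \<inter> {v2 * s<..<v1 * s})"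
proof -
  define a where "a = xi * exp (- xi * s) / (1 + lam * s)"
  define w where "w = diffuse_weight lam xi v1 v2 s"
  define m where "m = measure lborel (A \<inter> {v2 * s<..<v1 * s})"
  have pos: "0 < 1 + lam * s"
    using lam s by (simp add: add_pos_nonneg)
  have nonneg: "0 \<le> a" "0 \<le> w" "0 \<le> m"
    using pos xi v12 lam by (simp_all add: a_def w_def m_def diffuse_weight_def)
  have "emeasure lborel (A \<inter> {v2 * s<..<v1 * s}) < \<infinity>"
    by (intro emeasure_bounded_finite bounded_Int) auto
  then have "emeasure lborel (A \<inter> {v2 * s<..<v1 * s}) = ennreal m"
    unfolding m_def by (intro emeasure_eq_ennreal_measure) auto
  moreover have "xi * exp (- xi * s) * p_prob lam v1 v2 vj s A = a * indicator A (vj * s) + w * m"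
    unfolding p_prob_eq_measure[OF \<open>A \<in> sets borel\<close>] a_def w_def m_def diffuse_weight_def
    by (simp add: field_simps)
  ultimately show ?thesis
    unfolding a_def[symmetric] w_def[symmetric] using nonneg
    by (simp add: ennreal_mult' split: split_indicator)
qed

lemma nn_integral_diffuse_weight_shift:
  assumes lam: "0 < lam" and xi: "0 < xi" and v12: "v2 < v1" and [measurable]: "U \<in> sets borel"
  shows "(\<integral>\<^sup>+s. ennreal (diffuse_weight lam xi v1 v2 s) * indicator U (xi / lam + xi * s) \<partial>lborel)
           = ennreal (xi * exp (xi / lam) / (v1 - v2)) * (\<integral>\<^sup>+u\<in>U. ennreal (exp (- u) / u) \<partial>lborel)"
proof -
  define K where "K = xi * exp (xi / lam) / (v1 - v2)"
  have K: "0 \<le> K"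
    using xi v12 by (simp add: K_def)
  have weight: "K * xi * (exp (- (xi / lam + xi * s)) / (xi / lam + xi * s))
                  = diffuse_weight lam xi v1 v2 s" for s
  proof -
    have "exp (- (xi / lam + xi * s)) = exp (- xi * s) / exp (xi / lam)"
      by (simp add: exp_diff[symmetric])
    moreover have "xi / lam + xi * s = xi * (1 + lam * s) / lam"
      using lam by (simp add: field_simps)
    \<comment> \<open>at P = 1 + \<lambda> s = 0 both sides are 0 only because x / 0 = 0\<close>
    moreover have "K * xi * (E / exp (xi / lam) / (xi * P / lam)) = xi * E * lam / ((v1 - v2) * P)"
      for E P
      using lam xi v12 by (cases "P = 0") (simp_all add: K_def field_simps)
    ultimately show ?thesis
      by (simp add: diffuse_weight_def)
  qed
  have "ennreal K * (\<integral>\<^sup>+u\<in>U. ennreal (exp (- u) / u) \<partial>lborel)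
        = ennreal K * (ennreal \<bar>xi\<bar> * (\<integral>\<^sup>+s. ennreal (exp (- (xi / lam + xi * s)) / (xi / lam + xi * s))
                                            * indicator U (xi / lam + xi * s) \<partial>lborel))"
    by (subst nn_integral_real_affine[where t = "xi / lam" and c = xi]) (use xi in auto)
  also have "\<dots> = (\<integral>\<^sup>+s. ennreal (diffuse_weight lam xi v1 v2 s) * indicator U (xi / lam + xi * s) \<partial>lborel)"
  proof -
    have "ennreal K * (ennreal \<bar>xi\<bar> * (ennreal r * i)) = ennreal (K * xi * r) * i" for r i
      using K xi by (simp add: ennreal_mult' mult.assoc)
    then have pointwise: "ennreal K * (ennreal \<bar>xi\<bar> * (ennreal (exp (- (xi / lam + xi * s)) / (xi / lam + xi * s))
                            * indicator U (xi / lam + xi * s)))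
                          = ennreal (diffuse_weight lam xi v1 v2 s) * indicator U (xi / lam + xi * s)" for s
      by (simp only: weight)
    show ?thesis
      by (subst nn_integral_cmult[symmetric], simp)+ (simp only: pointwise)
  qed
  finally show ?thesis
    by (simp add: K_def)
qed

lemma set_nn_integral_Gamma0_integrand:
  assumes z: "0 < z" and [measurable]: "U \<in> sets borel" and Uz: "U \<subseteq> {z..}"
  shows "(\<integral>\<^sup>+u\<in>U. ennreal (exp (- u) / u) \<partial>lborel) = ennreal (\<integral>u\<in>U. exp (- u) / u \<partial>lborel)"
proof -
  have nonneg: "0 \<le> exp (- u) / u" if "u \<in> U" for u
    using that Uz z by (auto intro: less_le_trans)
  have "(\<integral>\<^sup>+u\<in>U. ennreal (exp (- u) / u) \<partial>lborel)
        \<le> (\<integral>\<^sup>+u. ennreal (1 / z) * (ennreal (exp (- u)) * indicator {z..} u) \<partial>lborel)"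
    using Uz z
    by (intro nn_integral_mono)
       (auto simp: ennreal_mult'[symmetric] divide_inverse intro!: ennreal_leI mult_left_mono
             split: split_indicator)
  also have "\<dots> = ennreal (1 / z) * ennreal (exp (- z))"
    using nn_integral_exp_minus_Ici[of 1 z] by (subst nn_integral_cmult) auto
  finally have "(\<integral>\<^sup>+u\<in>U. ennreal (exp (- u) / u) \<partial>lborel) < \<infinity>"
    by (simp add: ennreal_mult_less_top order_le_less_trans flip: ennreal_mult')
  moreover have "(\<integral>u\<in>U. exp (- u) / u \<partial>lborel) = enn2real (\<integral>\<^sup>+u\<in>U. ennreal (exp (- u) / u) \<partial>lborel)"
    by (rule set_integral_eq_enn2real_set_nn_integral) (simp_all add: nonneg)
  ultimately show ?thesis
    by simp
qed

lemma diffuse_density_eq_Gamma0: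
  assumes lam: "0 < lam" and xi: "0 < xi" and v12: "v2 < v1"
    and [measurable]: "U \<in> sets borel" and z: "0 < z" "U \<subseteq> {z..}"
    and window: "AE s in lborel. (0 \<le> s \<and> v2 * s < x \<and> x < v1 * s) \<longleftrightarrow> xi / lam + xi * s \<in> U"
  shows "diffuse_density lam xi v1 v2 x
           = ennreal (xi * exp (xi / lam) / (v1 - v2) * (\<integral>u\<in>U. exp (- u) / u \<partial>lborel))"
proof -
  have "diffuse_density lam xi v1 v2 x
        = (\<integral>\<^sup>+s. ennreal (diffuse_weight lam xi v1 v2 s) * indicator U (xi / lam + xi * s) \<partial>lborel)"
    unfolding diffuse_density_def using window
    by (intro nn_integral_cong_AE) (auto elim!: eventually_mono split: split_indicator)
  also have "\<dots> = ennreal (xi * exp (xi / lam) / (v1 - v2)) * ennreal (\<integral>u\<in>U. exp (- u) / u \<partial>lborel)"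
    using set_nn_integral_Gamma0_integrand[OF z(1) _ z(2)]
    by (simp add: nn_integral_diffuse_weight_shift[OF lam xi v12])
  also have "\<dots> = ennreal (xi * exp (xi / lam) / (v1 - v2) * (\<integral>u\<in>U. exp (- u) / u \<partial>lborel))"
    by (rule ennreal_mult'[symmetric]) (use xi v12 in simp)
  finally show ?thesis .
qed

lemma Mx_nonneg:
  assumes "v2 < 0" "0 < v1"
  shows "0 \<le> Mx v1 v2 x"
  unfolding Mx_def le_max_iff_disj using assms
  by (cases "0 \<le> x") (simp_all add: divide_nonneg_pos divide_nonpos_neg)

lemma AE_reachable_iff_straddling:
  assumes v2: "v2 < 0" and v1: "0 < v1" and xi: "0 < xi"
  shows "AE s in lborel. (0 \<le> s \<and> v2 * s < x \<and> x < v1 * s)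
                         \<longleftrightarrow> xi / lam + xi * s \<in> {(Mx v1 v2 x + 1 / lam) * xi..}"
  using AE_lborel_singleton[of "Mx v1 v2 x"]
proof eventually_elim
  case (elim s)
  have "v2 * s < x \<longleftrightarrow> x / v2 < s" "x < v1 * s \<longleftrightarrow> x / v1 < s"
    using v1 v2 by (simp_all add: neg_divide_less_eq pos_divide_less_eq mult.commute[of _ s])
  then have "(0 \<le> s \<and> v2 * s < x \<and> x < v1 * s) \<longleftrightarrow> Mx v1 v2 x < s"
    using Mx_nonneg[OF v2 v1, of x] by (auto simp: Mx_def)
  also have "\<dots> \<longleftrightarrow> xi / lam + xi * s \<in> {(Mx v1 v2 x + 1 / lam) * xi..}"
    using elim xi by (auto simp: algebra_simps)
  finally show ?case .
qed

lemma AE_reachable_iff_positive: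
  fixes v1 v2 x lam xi :: real
  assumes v2: "0 < v2" and v12: "v2 < v1" and x: "0 < x" and xi: "0 < xi"
  shows "AE s in lborel. (0 \<le> s \<and> v2 * s < x \<and> x < v1 * s)
           \<longleftrightarrow> xi / lam + xi * s \<in> {(x / v1 + 1 / lam) * xi..(x / v2 + 1 / lam) * xi}"
proof -
  have v1: "0 < v1"
    using v2 v12 by linarith
  show ?thesis
    using AE_lborel_singleton[of "x / v1"] AE_lborel_singleton[of "x / v2"]
  proof eventually_elim
    case (elim s)
    have "v2 * s < x \<longleftrightarrow> s < x / v2" "x < v1 * s \<longleftrightarrow> x / v1 < s"
      using v1 v2 by (simp_all add: pos_less_divide_eq pos_divide_less_eq mult.commute[of _ s])
    moreover have "0 < x / v1"
      using x v1 by simp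
    moreover have "(a + 1 / lam) * xi \<le> xi / lam + xi * s \<longleftrightarrow> a \<le> s"
      "xi / lam + xi * s \<le> (a + 1 / lam) * xi \<longleftrightarrow> s \<le> a" for a
      using xi by (auto simp: algebra_simps)
    ultimately show ?case
      using elim by auto
  qed
qed

definition stationary_density :: "real \<Rightarrow> real \<Rightarrow> real \<Rightarrow> real \<Rightarrow> real \<Rightarrow> real \<Rightarrow> real" where
  "stationary_density lam xi v1 v2 vj x =
     (if v2 < 0 then
        sgn vj * (if x / vj > 0 then 1 else 0) * (xi * exp (- xi * x / vj) / (vj + lam * x))
        + xi * exp (xi / lam) / (v1 - v2) * upper_Gamma0 ((Mx v1 v2 x + 1 / lam) * xi)
      else
        (if x > 0 then 1 else 0) *
          (xi * exp (- xi * x / vj) / (vj + lam * x)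
           + xi * exp (xi / lam) / (v1 - v2)
             * Gamma0_between ((x / v1 + 1 / lam) * xi) ((x / v2 + 1 / lam) * xi)))"

lemma stationary_density_Gamma0_form:
  assumes lam: "0 < lam" and xi: "0 < xi" and v12: "v2 < v1"
    and speeds: "v2 < 0 \<and> 0 < v1 \<or> 0 < v2" and vj: "vj \<in> {v1, v2}"
  obtains U z where "U \<in> sets borel" "0 < z" "U \<subseteq> {z..}"
    "AE s in lborel. (0 \<le> s \<and> v2 * s < x \<and> x < v1 * s) \<longleftrightarrow> xi / lam + xi * s \<in> U"
    "stationary_density lam xi v1 v2 vj x
       = atom_density lam xi vj x + xi * exp (xi / lam) / (v1 - v2) * (\<integral>u\<in>U. exp (- u) / u \<partial>lborel)"
proof -
  consider (straddling) "v2 < 0" "0 < v1" | (ahead) "0 < v2" "0 < x" | (behind) "0 < v2" "x \<le> 0"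
    using speeds by linarith
  then show ?thesis
  proof cases
    case straddling
    have "0 < (Mx v1 v2 x + 1 / lam) * xi"
      using Mx_nonneg[OF straddling, of x] lam xi by (simp add: add_nonneg_pos)
    then show ?thesis
      using straddling AE_reachable_iff_straddling[OF straddling xi]
      by (intro that[of "{(Mx v1 v2 x + 1 / lam) * xi..}" "(Mx v1 v2 x + 1 / lam) * xi"])
         (auto simp: stationary_density_def atom_density_def upper_Gamma0_def)
  next
    case ahead
    then have "0 < vj"
      using vj v12 by auto
    moreover have "0 < (x / v1 + 1 / lam) * xi"
      using ahead v12 lam xi by (simp add: add_pos_pos)
    ultimately show ?thesis
      using ahead AE_reachable_iff_positive[OF ahead(1) v12 ahead(2) xi]
      by (intro that[of "{(x / v1 + 1 / lam) * xi..(x / v2 + 1 / lam) * xi}" "(x / v1 + 1 / lam) * xi"])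
         (auto simp: stationary_density_def atom_density_def Gamma0_between_def)
  next
    case behind
    then have "0 < vj"
      using vj v12 by auto
    moreover have "\<not> (0 \<le> s \<and> v2 * s < x)" for s
      using behind mult_nonneg_nonneg[of v2 s] by linarith
    ultimately show ?thesis
      using behind
      by (intro that[of "{}" 1])
         (auto simp: stationary_density_def atom_density_def zero_less_divide_iff
                     set_lebesgue_integral_def)
  qed
qed

lemma stationary_density_split:
  assumes lam: "0 < lam" and xi: "0 < xi" and v12: "v2 < v1"
    and speeds: "v2 < 0 \<and> 0 < v1 \<or> 0 < v2" and vj: "vj \<in> {v1, v2}"
  shows "stationary_density lam xi v1 v2 vj x
           = atom_density lam xi vj x + enn2real (diffuse_density lam xi v1 v2 x)"
    and "ennreal (stationary_density lam xi v1 v2 vj x)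
           = ennreal (atom_density lam xi vj x) + diffuse_density lam xi v1 v2 x"
proof -
  obtain U z where [measurable]: "U \<in> sets borel" and z: "0 < z" "U \<subseteq> {z..}"
    and window: "AE s in lborel. (0 \<le> s \<and> v2 * s < x \<and> x < v1 * s) \<longleftrightarrow> xi / lam + xi * s \<in> U"
    and density: "stationary_density lam xi v1 v2 vj x
                    = atom_density lam xi vj x + xi * exp (xi / lam) / (v1 - v2) * (\<integral>u\<in>U. exp (- u) / u \<partial>lborel)"
    using stationary_density_Gamma0_form[OF assms] .
  define c where "c = xi * exp (xi / lam) / (v1 - v2) * (\<integral>u\<in>U. exp (- u) / u \<partial>lborel)"
  have "0 \<le> (\<integral>u\<in>U. exp (- u) / u \<partial>lborel)"
    unfolding set_lebesgue_integral_def using z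
    by (intro Bochner_Integration.integral_nonneg) (auto split: split_indicator intro: less_le_trans)
  then have "0 \<le> c"
    using xi v12 by (simp add: c_def)
  moreover have "diffuse_density lam xi v1 v2 x = ennreal c"
    unfolding c_def by (rule diffuse_density_eq_Gamma0[OF lam xi v12 _ z window]) simp
  moreover have "0 \<le> atom_density lam xi vj x"
    using atom_density_nonneg[OF lam] xi by simp
  ultimately show "stationary_density lam xi v1 v2 vj x
                     = atom_density lam xi vj x + enn2real (diffuse_density lam xi v1 v2 x)"
    and "ennreal (stationary_density lam xi v1 v2 vj x)
           = ennreal (atom_density lam xi vj x) + diffuse_density lam xi v1 v2 x"
    unfolding density c_def[symmetric] by simp_all
qed

lemma set_nn_integral_stationary_density:
  assumes lam: "0 < lam" and xi: "0 < xi" and v12: "v2 < v1"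
    and speeds: "v2 < 0 \<and> 0 < v1 \<or> 0 < v2" and vj: "vj \<in> {v1, v2}"
    and A[measurable]: "A \<in> sets borel"
  shows "(\<integral>\<^sup>+x\<in>A. ennreal (stationary_density lam xi v1 v2 vj x) \<partial>lborel)
           = ennreal xi * (\<integral>\<^sup>+s\<in>{0..}. ennreal (exp (- xi * s) * p_prob lam v1 v2 vj s A) \<partial>lborel)"
proof -
  have vj0: "vj \<noteq> 0"
    using vj speeds v12 by auto
  have "(\<integral>\<^sup>+x\<in>A. ennreal (stationary_density lam xi v1 v2 vj x) \<partial>lborel)
        = (\<integral>\<^sup>+x\<in>A. ennreal (atom_density lam xi vj x) \<partial>lborel)
          + (\<integral>\<^sup>+x\<in>A. diffuse_density lam xi v1 v2 x \<partial>lborel)"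
    by (simp add: stationary_density_split(2)[OF assms(1-5)] nn_set_integral_add)
  also have "\<dots> = (\<integral>\<^sup>+s\<in>{0..}. ennreal (xi * exp (- xi * s) / (1 + lam * s)) * indicator A (vj * s)
                      + ennreal (diffuse_weight lam xi v1 v2 s) * emeasure lborel (A \<inter> {v2 * s<..<v1 * s}) \<partial>lborel)"
    unfolding set_nn_integral_atom_density[OF vj0 A] set_nn_integral_diffuse_density[OF A]
    by (rule nn_set_integral_add[symmetric]) (auto simp: diffuse_weight_def)
  also have "\<dots> = (\<integral>\<^sup>+s\<in>{0..}. ennreal (xi * exp (- xi * s) * p_prob lam v1 v2 vj s A) \<partial>lborel)"
  proof (intro nn_integral_cong)
    fix s
    show "(ennreal (xi * exp (- xi * s) / (1 + lam * s)) * indicator A (vj * s)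
             + ennreal (diffuse_weight lam xi v1 v2 s) * emeasure lborel (A \<inter> {v2 * s<..<v1 * s}))
            * indicator {0..} s
          = ennreal (xi * exp (- xi * s) * p_prob lam v1 v2 vj s A) * indicator {0..} s"
      using ennreal_weighted_p_prob[OF lam v12 less_imp_le[OF xi] _ A, of s vj]
      by (cases "0 \<le> s") simp_all
  qed
  also have "\<dots> = ennreal xi * (\<integral>\<^sup>+s\<in>{0..}. ennreal (exp (- xi * s) * p_prob lam v1 v2 vj s A) \<partial>lborel)"
  proof -
    have "ennreal (xi * e * p) = ennreal xi * ennreal (e * p)" for e p
      using xi by (simp add: ennreal_mult' mult.assoc)
    then show ?thesis
      by (subst nn_integral_cmult[symmetric]) (auto simp: mult.assoc)
  qed
  finally show ?thesis .
qed

lemma set_integral_stationary_density: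
  assumes lam: "0 < lam" and xi: "0 < xi" and v12: "v2 < v1"
    and speeds: "v2 < 0 \<and> 0 < v1 \<or> 0 < v2" and vj: "vj \<in> {v1, v2}"
    and A[measurable]: "A \<in> sets borel"
  shows "(\<integral>x\<in>A. stationary_density lam xi v1 v2 vj x \<partial>lborel)
           = xi * (\<integral>s\<in>{0..}. exp (- xi * s) * p_prob lam v1 v2 vj s A \<partial>lborel)"
proof -
  note split = stationary_density_split(1)[OF lam xi v12 speeds vj]
  have [measurable]: "stationary_density lam xi v1 v2 vj \<in> borel_measurable borel"
    by (subst split[abs_def]) measurable
  have "(\<integral>x\<in>A. stationary_density lam xi v1 v2 vj x \<partial>lborel)
        = enn2real (\<integral>\<^sup>+x\<in>A. ennreal (stationary_density lam xi v1 v2 vj x) \<partial>lborel)"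
    using atom_density_nonneg[OF lam less_imp_le[OF xi]]
    by (intro set_integral_eq_enn2real_set_nn_integral) (simp_all add: split)
  moreover have "(\<integral>s\<in>{0..}. exp (- xi * s) * p_prob lam v1 v2 vj s A \<partial>lborel)
        = enn2real (\<integral>\<^sup>+s\<in>{0..}. ennreal (exp (- xi * s) * p_prob lam v1 v2 vj s A) \<partial>lborel)"
    using p_prob_nonneg_le_1[OF lam v12 _ A]
    by (intro set_integral_eq_enn2real_set_nn_integral) simp_all
  ultimately show ?thesis
    using xi by (simp add: set_nn_integral_stationary_density[OF assms] enn2real_mult)
qed

lemma ptilde_prob_stationary_error:
  assumes lam: "0 < lam" and xi: "0 < xi" and v12: "v2 < v1"
    and speeds: "v2 < 0 \<and> 0 < v1 \<or> 0 < v2" and vj: "vj \<in> {v1, v2}"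
    and t: "0 \<le> t" and A: "A \<in> sets borel"
  shows "\<bar>ptilde_prob lam xi v1 v2 vj t A - (\<integral>x\<in>A. stationary_density lam xi v1 v2 vj x \<partial>lborel)\<bar>
           \<le> exp (- xi * t)"
  unfolding ptilde_prob_def set_integral_stationary_density[OF lam xi v12 speeds vj A]
  using exponential_mixture_truncation_error[OF xi p_prob_measurable[OF A] _ t]
    p_prob_nonneg_le_1[OF lam v12 _ A]
  by simp

theorem corollary3:
  fixes lam xi v1 v2 :: real and j :: nat
  assumes "lam > 0" and "xi > 0" and "v2 < v1"
    and "(v2 < 0 \<and> 0 < v1) \<or> 0 < v2"
    and "j \<in> {1, 2}"
  defines "plim \<equiv> (\<lambda>x::real. let vj = (if j = 1 then v1 else v2) in
      if v2 < 0 then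
        sgn vj * (if x / vj > 0 then 1 else 0) * (xi * exp (- xi * x / vj) / (vj + lam * x))
        + xi * exp (xi / lam) / (v1 - v2) * upper_Gamma0 ((Mx v1 v2 x + 1 / lam) * xi)
      else
        (if x > 0 then 1 else 0) *
          (xi * exp (- xi * x / vj) / (vj + lam * x)
           + xi * exp (xi / lam) / (v1 - v2)
             * Gamma0_between ((x / v1 + 1 / lam) * xi) ((x / v2 + 1 / lam) * xi)))"
  shows "\<forall>\<epsilon>>0. \<exists>T. \<forall>t\<ge>T. \<forall>A\<in>sets borel.
           \<bar>ptilde_prob lam xi v1 v2 (if j = 1 then v1 else v2) t A - (\<integral>x\<in>A. plim x \<partial>lborel)\<bar> < \<epsilon>"
proof (intro allI impI)
  fix \<epsilon> :: real
  assume "0 < \<epsilon>"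
  define vj where "vj = (if j = 1 then v1 else v2)"
  have plim: "plim = stationary_density lam xi v1 v2 vj"
    by (simp add: plim_def vj_def stationary_density_def Let_def fun_eq_iff)
  have "\<forall>\<^sub>F t in at_top. exp (- xi * t) < \<epsilon>"
    using \<open>0 < xi\<close> \<open>0 < \<epsilon>\<close> by real_asymp
  then have "\<forall>\<^sub>F t in at_top. 0 \<le> t \<and> exp (- xi * t) < \<epsilon>"
    by (intro eventually_conj eventually_ge_at_top)
  then obtain T where T: "\<And>t. T \<le> t \<Longrightarrow> 0 \<le> t \<and> exp (- xi * t) < \<epsilon>"
    by (auto simp: eventually_at_top_linorder)
  have vj: "vj \<in> {v1, v2}"
    by (simp add: vj_def)
  have "\<bar>ptilde_prob lam xi v1 v2 vj t A - (\<integral>x\<in>A. plim x \<partial>lborel)\<bar> < \<epsilon>"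
    if "T \<le> t" and "A \<in> sets borel" for t A
    using ptilde_prob_stationary_error[OF assms(1-4) vj _ that(2)] T[OF that(1)]
    unfolding plim by fastforce
  then show "\<exists>T. \<forall>t\<ge>T. \<forall>A\<in>sets borel.
               \<bar>ptilde_prob lam xi v1 v2 (if j = 1 then v1 else v2) t A - (\<integral>x\<in>A. plim x \<partial>lborel)\<bar> < \<epsilon>"
    unfolding vj_def by blast
qed

end
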